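(* Let $T$ be a rooted tree whose leaves are the keys $[n]$, for each node $v$ let $R_v$ be the set of leaves below $v$, let $p\in[0,1]^n$ with $\sum_ip_i$ an integer, and let $S$ be the random output of the hierarchy summarization procedure applied to $T$ and $p$. Let $Q=R_1\cup\dots\cup R_\ell$ be a union of $\ell$ pairwise disjoint ranges $R_h=R_{v_h}$. Then, with $p(R)=\sum_{i\in R}p_i$, the discrepancy satisfies $\big||S\cap Q|-p(Q)\big|\le\ell$, and it is distributed as the error of a VarOpt sample on a subset of expected size $\mu=\sum_{h=1}^\ell\big(p(R_h)-\lfloor p(R_h)\rfloor\big)\le\ell$: namely, the random variables $Y_h=|S\cap R_h|-\lfloor p(R_h)\rfloor$ take values in $\{0,1\}$, satisfy $\mathbb{E}[Y_h]=p(R_h)-\lfloor p(R_h)\rfloor$, satisfy for every $J\subseteq\{1,\dots,\ell\}$ the bounds $\mathbb{E}[\prod_{h\in J}Y_h]\le\prod_{h\in J}\mathbb{E}[Y_h]$ and $\mathbb{E}[\prod_{h\in J}(1-Y_h)]\le\prod_{h\in J}(1-\mathbb{E}[Y_h])$, and $|S\cap Q|-p(Q)=\sum_{h=1}^\ell Y_h-\mu$.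
   Context: Pair-Aggregate$(p,i,j)$, for indices $i\ne j$ with $0<p_i,p_j<1$, modifies only entries $i,j$ of the current vector $p$: if $p_i+p_j<1$, then with probability $p_i/(p_i+p_j)$ set $(p_i,p_j)\leftarrow(p_i+p_j,0)$ and otherwise $(p_i,p_j)\leftarrow(0,p_i+p_j)$; if $p_i+p_j\ge1$, then with probability $(1-p_j)/(2-p_i-p_j)$ set $(p_i,p_j)\leftarrow(1,p_i+p_j-1)$ and otherwise $(p_i,p_j)\leftarrow(p_i+p_j-1,1)$ (fresh independent randomness each call). The hierarchy summarization procedure: starting from $p$, while at least two indices have current value in $(0,1)$, choose a pair $i\ne j$ of such indices such that no other pair of indices with current values in $(0,1)$ has a lowest common ancestor in $T$ that is a proper descendant of $\mathrm{LCA}(i,j)$ (ties arbitrary), and apply Pair-Aggregate to it; at termination output $S=\{i:p_i=1\}$. A VarOpt sample is a random subset with inclusion probabilities given, fixed size, and the inclusion/exclusion product bounds $\Pr[J\subseteq S]\le\prod_{i\in J}p_i$, $\Pr[J\cap S=\emptyset]\le\prod_{i\in J}(1-p_i)$. *)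

theory Defs
  imports "HOL-Probability.Probability"
begin

datatype ktree = Leaf nat | Node "ktree list"

fun leaves :: "ktree \<Rightarrow> nat list" where
  "leaves (Leaf i) = [i]"
| "leaves (Node ts) = concat (map leaves ts)"

text \<open>All nodes of a tree (the subtrees rooted at them); the descendants of v are subtrees v.\<close>
fun subtrees :: "ktree \<Rightarrow> ktree set" where
  "subtrees (Leaf i) = {Leaf i}"
| "subtrees (Node ts) = insert (Node ts) (\<Union>t\<in>set ts. subtrees t)"

text \<open>Internal nodes have at least one child (so all leaves of the tree are keys).\<close>
fun no_empty_node :: "ktree \<Rightarrow> bool" where
  "no_empty_node (Leaf i) = True"
| "no_empty_node (Node ts) = (ts \<noteq> [] \<and> (\<forall>t\<in>set ts. no_empty_node t))"

definition tree_on :: "ktree \<Rightarrow> nat \<Rightarrow> bool" where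
  "tree_on T n \<longleftrightarrow> no_empty_node T \<and> distinct (leaves T) \<and> set (leaves T) = {1..n}"

definition range_of :: "ktree \<Rightarrow> nat set" where
  "range_of v = set (leaves v)"

definition lca :: "ktree \<Rightarrow> nat \<Rightarrow> nat \<Rightarrow> ktree" where
  "lca T i j = (THE v. v \<in> subtrees T \<and> i \<in> range_of v \<and> j \<in> range_of v \<and>
      (\<forall>w\<in>subtrees v. w \<noteq> v \<longrightarrow> \<not> (i \<in> range_of w \<and> j \<in> range_of w)))"

definition frac_idx :: "nat \<Rightarrow> (nat \<Rightarrow> real) \<Rightarrow> nat set" where
  "frac_idx n q = {i \<in> {1..n}. 0 < q i \<and> q i < 1}"

definition pair_aggregate :: "(nat \<Rightarrow> real) \<Rightarrow> nat \<Rightarrow> nat \<Rightarrow> (nat \<Rightarrow> real) pmf" where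
  "pair_aggregate q i j =
     (if q i + q j < 1 then
        map_pmf (\<lambda>b. if b then q(i := q i + q j, j := 0) else q(i := 0, j := q i + q j))
          (bernoulli_pmf (q i / (q i + q j)))
      else
        map_pmf (\<lambda>b. if b then q(i := 1, j := q i + q j - 1) else q(i := q i + q j - 1, j := 1))
          (bernoulli_pmf ((1 - q j) / (2 - q i - q j))))"

definition admissible_pair :: "ktree \<Rightarrow> nat \<Rightarrow> (nat \<Rightarrow> real) \<Rightarrow> nat \<times> nat \<Rightarrow> bool" where
  "admissible_pair T n q ij \<longleftrightarrow>
     (let i = fst ij; j = snd ij in
      i \<noteq> j \<and> i \<in> frac_idx n q \<and> j \<in> frac_idx n q \<and>
      (\<forall>k\<in>frac_idx n q. \<forall>l\<in>frac_idx n q. k \<noteq> l \<longrightarrow>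
          \<not> (lca T k l \<in> subtrees (lca T i j) \<and> lca T k l \<noteq> lca T i j)))"

text \<open>A tie-breaking rule: in every state with at least two fractional keys, it selects an
  admissible pair.\<close>
definition valid_selector :: "ktree \<Rightarrow> nat \<Rightarrow> ((nat \<Rightarrow> real) \<Rightarrow> nat \<times> nat) \<Rightarrow> bool" where
  "valid_selector T n sel \<longleftrightarrow>
     (\<forall>q. 2 \<le> card (frac_idx n q) \<longrightarrow> admissible_pair T n q (sel q))"

text \<open>Up to k iterations of the while loop (each iteration makes at least one fractional
  entry integral, so n iterations always reach termination).\<close>
primrec hsum_iter :: "nat \<Rightarrow> ((nat \<Rightarrow> real) \<Rightarrow> nat \<times> nat) \<Rightarrow> nat \<Rightarrow> (nat \<Rightarrow> real) \<Rightarrow> (nat \<Rightarrow> real) pmf" where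
  "hsum_iter n sel 0 q = return_pmf q"
| "hsum_iter n sel (Suc k) q =
     (if 2 \<le> card (frac_idx n q)
      then pair_aggregate q (fst (sel q)) (snd (sel q)) \<bind> hsum_iter n sel k
      else return_pmf q)"

definition hier_summarize :: "nat \<Rightarrow> ((nat \<Rightarrow> real) \<Rightarrow> nat \<times> nat) \<Rightarrow> (nat \<Rightarrow> real) \<Rightarrow> nat set pmf" where
  "hier_summarize n sel p = map_pmf (\<lambda>q. {i \<in> {1..n}. q i = 1}) (hsum_iter n sel n p)"

end

theory Submission
  imports Defs
begin

text \<open>
  Call a range \<open>R\<^sub>h\<close> settled once it contains at most one fractional key. Since pairs are
  chosen by lowest LCA, a pair aggregation crosses the boundary of \<open>R\<^sub>h\<close> only when \<open>R\<^sub>h\<close> is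
  settled, and then the single fractional key of \<open>R\<^sub>h\<close> carries the whole excess
  \<open>q(R\<^sub>h) - \<lfloor>p(R\<^sub>h)\<rfloor>\<close>. So this excess stays in \<open>[0,1]\<close> throughout, and at termination it
  equals \<open>Y\<^sub>h\<close>. A pair aggregation preserves the marginals of the two entries it touches and
  makes them negatively correlated, both as inclusion and as exclusion indicators. As the
  ranges are disjoint, a step changes at most two factors of a product of the \<open>Y\<^sub>h\<close> (or of
  the \<open>1 - Y\<^sub>h\<close>), each following one touched entry; so the product bounds hold step by step
  and, by induction over the run, for the output. The two bounds for \<open>J = {h}\<close> together
  give \<open>E[Y\<^sub>h] = p(R\<^sub>h) - \<lfloor>p(R\<^sub>h)\<rfloor>\<close>.
\<close>

lemma expectation_cong_set_pmf:
  fixes f g :: "'a \<Rightarrow> real"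
  shows "(\<And>x. x \<in> set_pmf M \<Longrightarrow> f x = g x) \<Longrightarrow>
    measure_pmf.expectation M f = measure_pmf.expectation M g"
  by (rule integral_cong_AE) (auto simp: AE_measure_pmf_iff)

lemma sum_diff_on_changed:
  fixes q q' :: "'a \<Rightarrow> 'b::ab_group_add"
  assumes "finite A" "\<forall>k. k \<notin> D \<longrightarrow> q' k = q k"
  shows "sum q' A - sum q A = (\<Sum>k\<in>A \<inter> D. q' k - q k)"
proof -
  have "sum q' A - sum q A = (\<Sum>k\<in>A. q' k - q k)" by (simp add: sum_subtractf)
  also have "\<dots> = (\<Sum>k\<in>A \<inter> D. q' k - q k)"
    using assms by (intro sum.mono_neutral_right) auto
  finally show ?thesis .
qed

lemma sum_minus_in_Ints:
  fixes q :: "'a \<Rightarrow> real"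
  assumes "finite A" "i \<in> A" "\<forall>k\<in>A - {i}. q k \<in> \<int>"
  shows "sum q A - q i \<in> \<int>"
proof -
  have "sum q (A - {i}) \<in> \<int>" using assms(3) by (intro Ints_sum) auto
  then show ?thesis using sum.remove[OF assms(1,2), of q] by simp
qed

lemma Int_pair_cases:
  obtains k where "A \<inter> {i, j} = {k}" | "A \<inter> {i, j} \<in> {{}, {i, j}}"
  by (cases "i \<in> A"; cases "j \<in> A") auto

lemma card_Int_UNION_minus_sum:
  fixes p :: "'b \<Rightarrow> real" and c :: "'a \<Rightarrow> real" and A :: "'a \<Rightarrow> 'b set"
  assumes "finite H" "\<And>h. h \<in> H \<Longrightarrow> finite (A h)" "disjoint_family_on A H"
  shows "real (card (X \<inter> (\<Union>h\<in>H. A h))) - (\<Sum>i\<in>(\<Union>h\<in>H. A h). p i)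
    = (\<Sum>h\<in>H. real (card (X \<inter> A h)) - c h) - (\<Sum>h\<in>H. (\<Sum>i\<in>A h. p i) - c h)"
proof -
  have "X \<inter> (\<Union>h\<in>H. A h) = (\<Union>h\<in>H. X \<inter> A h)" by blast
  moreover have "card (\<Union>h\<in>H. X \<inter> A h) = (\<Sum>h\<in>H. card (X \<inter> A h))"
    using assms by (intro card_UN_disjoint) (auto simp: disjoint_family_on_def)
  ultimately have "card (X \<inter> (\<Union>h\<in>H. A h)) = (\<Sum>h\<in>H. card (X \<inter> A h))" by simp
  moreover have "(\<Sum>i\<in>(\<Union>h\<in>H. A h). p i) = (\<Sum>h\<in>H. \<Sum>i\<in>A h. p i)"
    using assms by (simp add: sum.UNION_disjoint disjoint_family_on_def)
  ultimately show ?thesis by (simp add: sum_subtractf)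
qed

lemma abs_sum_minus_le_card:
  fixes y :: "'a \<Rightarrow> real"
  assumes "finite H" "\<forall>h\<in>H. y h \<in> {0..1}" "\<mu> \<in> {0..real (card H)}"
  shows "\<bar>sum y H - \<mu>\<bar> \<le> real (card H)"
  using assms sum_bounded_above[of H y 1] sum_nonneg[of H y] by auto

section \<open>Trees\<close>

lemma self_in_subtrees: "t \<in> subtrees t"
  by (cases t) auto

lemma subtrees_trans: "w \<in> subtrees v \<Longrightarrow> v \<in> subtrees u \<Longrightarrow> w \<in> subtrees u"
  by (induction u rule: subtrees.induct) auto

lemma range_of_subtree: "w \<in> subtrees v \<Longrightarrow> range_of w \<subseteq> range_of v"
  by (induction v rule: subtrees.induct) (auto simp: range_of_def)

lemma size_proper_subtree: "w \<in> subtrees v \<Longrightarrow> w \<noteq> v \<Longrightarrow> size w < size v"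
proof (induction v rule: subtrees.induct)
  case (2 ts)
  then obtain t where t: "t \<in> set ts" "w \<in> subtrees t" by auto
  have "size t < size (Node ts)"
    using size_list_estimation'[OF t(1), of "size t" size] by simp
  then show ?case using "2.IH"[OF t] by fastforce
qed simp

lemma distinct_concat_map_common:
  "distinct (concat (map f xs)) \<Longrightarrow> a \<in> set xs \<Longrightarrow> b \<in> set xs \<Longrightarrow>
    x \<in> set (f a) \<Longrightarrow> x \<in> set (f b) \<Longrightarrow> a = b"
  by (induction xs) auto

lemma subtrees_comparable:
  assumes "distinct (leaves T)" "v \<in> subtrees T" "w \<in> subtrees T"
    and "x \<in> range_of v" "x \<in> range_of w"
  shows "v \<in> subtrees w \<or> w \<in> subtrees v"
  using assms
proof (induction T arbitrary: v w rule: subtrees.induct)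
  case (2 ts)
  show ?case
  proof (cases "v = Node ts \<or> w = Node ts")
    case False
    then obtain t1 t2 where t: "t1 \<in> set ts" "v \<in> subtrees t1" "t2 \<in> set ts" "w \<in> subtrees t2"
      using "2.prems" by auto
    have "x \<in> range_of t1" "x \<in> range_of t2"
      using range_of_subtree t "2.prems" by blast+
    then have "t1 = t2"
      using distinct_concat_map_common[of leaves ts t1 t2 x] "2.prems"(1) t
      by (auto simp: range_of_def)
    moreover have "distinct (leaves t1)"
      using "2.prems"(1) t(1) by (auto simp: distinct_concat_iff)
    ultimately show ?thesis using "2.IH"[of t1 v w] "2.prems" t by auto
  qed (use "2.prems" in auto)
qed simp

lemma ex1_lca:
  assumes "distinct (leaves T)" "i \<in> range_of T" "j \<in> range_of T"
  shows "\<exists>!v. v \<in> subtrees T \<and> i \<in> range_of v \<and> j \<in> range_of v \<and>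
      (\<forall>w\<in>subtrees v. w \<noteq> v \<longrightarrow> \<not> (i \<in> range_of w \<and> j \<in> range_of w))"
proof -
  define P where "P v \<longleftrightarrow> v \<in> subtrees T \<and> i \<in> range_of v \<and> j \<in> range_of v" for v
  have "P T" using assms self_in_subtrees unfolding P_def by blast
  then obtain v where v: "P v" and v_least: "\<And>u. P u \<Longrightarrow> size v \<le> size u"
    using ex_has_least_nat[of P T size] by auto
  have minimal: "\<forall>w\<in>subtrees v. w \<noteq> v \<longrightarrow> \<not> (i \<in> range_of w \<and> j \<in> range_of w)"
    using v v_least size_proper_subtree subtrees_trans unfolding P_def by (meson leD)
  show ?thesis
  proof (rule ex1I[of _ v])
    fix u assume u: "u \<in> subtrees T \<and> i \<in> range_of u \<and> j \<in> range_of u \<and>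
      (\<forall>w\<in>subtrees u. w \<noteq> u \<longrightarrow> \<not> (i \<in> range_of w \<and> j \<in> range_of w))"
    then have "u \<in> subtrees v \<or> v \<in> subtrees u"
      using subtrees_comparable[OF assms(1), of u v i] v unfolding P_def by blast
    then show "u = v" using u v minimal unfolding P_def by metis
  qed (use v minimal P_def in blast)
qed

lemma lca_spec:
  assumes "distinct (leaves T)" "i \<in> range_of T" "j \<in> range_of T"
  shows "lca T i j \<in> subtrees T" "i \<in> range_of (lca T i j)" "j \<in> range_of (lca T i j)"
    and "\<And>w. w \<in> subtrees (lca T i j) \<Longrightarrow> i \<in> range_of w \<Longrightarrow> j \<in> range_of w \<Longrightarrow> w = lca T i j"
  using theI'[OF ex1_lca[OF assms]] unfolding lca_def[symmetric] by blast+

lemma lca_sym: "lca T i j = lca T j i"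
  unfolding lca_def by (rule arg_cong[where f = The]) blast

lemma lca_in_subtree:
  assumes "distinct (leaves T)" "u \<in> subtrees T" "i \<in> range_of u" "j \<in> range_of u"
  shows "lca T i j \<in> subtrees u"
proof -
  have ij: "i \<in> range_of T" "j \<in> range_of T"
    using range_of_subtree assms by blast+
  have "lca T i j \<in> subtrees u \<or> u \<in> subtrees (lca T i j)"
    using subtrees_comparable[OF assms(1) lca_spec(1)[OF assms(1) ij] assms(2)]
      lca_spec(2)[OF assms(1) ij] assms(3) by blast
  then show ?thesis
    using lca_spec(4)[OF assms(1) ij, of u] assms self_in_subtrees by metis
qed

lemma subtree_strictly_below_lca:
  assumes "distinct (leaves T)" "u \<in> subtrees T" "i \<in> range_of u" "j \<notin> range_of u"
    and "j \<in> range_of T"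
  shows "u \<in> subtrees (lca T i j)" "lca T i j \<notin> subtrees u"
proof -
  have ij: "i \<in> range_of T" "j \<in> range_of T"
    using range_of_subtree assms by blast+
  show "lca T i j \<notin> subtrees u"
    using range_of_subtree lca_spec(3)[OF assms(1) ij] assms(4) by blast
  then show "u \<in> subtrees (lca T i j)"
    using subtrees_comparable[OF assms(1) lca_spec(1)[OF assms(1) ij] assms(2)]
      lca_spec(2)[OF assms(1) ij] assms(3) by blast
qed

lemma admissible_pair_frac:
  "admissible_pair T n q (i, j) \<Longrightarrow> i \<noteq> j \<and> i \<in> frac_idx n q \<and> j \<in> frac_idx n q"
  by (simp add: admissible_pair_def)

lemma admissible_pair_entries:
  assumes "admissible_pair T n q (i, j)"
  shows "0 < q i" "q i < 1" "0 < q j" "q j < 1" "i \<noteq> j"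
  using assms by (auto simp: admissible_pair_def frac_idx_def)

lemma admissible_pair_swap:
  "admissible_pair T n q (i, j) \<longleftrightarrow> admissible_pair T n q (j, i)"
  unfolding admissible_pair_def Let_def by (auto simp: lca_sym)

text \<open>This is the only place where the LCA rule of the procedure enters.\<close>
lemma admissible_pair_crossing:
  assumes "tree_on T n" "u \<in> subtrees T" "admissible_pair T n q (i, j)"
    and "i \<in> range_of u" "j \<notin> range_of u"
  shows "frac_idx n q \<inter> range_of u = {i}"
proof (rule ccontr)
  have dist: "distinct (leaves T)" and keys: "range_of T = {1..n}"
    using assms(1) by (auto simp: tree_on_def range_of_def)
  have j: "j \<in> range_of T" using assms(3) keys by (auto simp: admissible_pair_def frac_idx_def)
  assume "frac_idx n q \<inter> range_of u \<noteq> {i}"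
  then obtain k where k: "k \<in> frac_idx n q" "k \<in> range_of u" "k \<noteq> i"
    using assms(3,4) by (auto simp: admissible_pair_def)
  have "lca T k i \<in> subtrees u" using lca_in_subtree[OF dist assms(2) k(2) assms(4)] .
  then have "lca T k i \<in> subtrees (lca T i j) \<and> lca T k i \<noteq> lca T i j"
    using subtree_strictly_below_lca[OF dist assms(2,4,5) j] subtrees_trans by metis
  then show False using assms(3) k(1,3) by (auto simp: admissible_pair_def)
qed

section \<open>Pair aggregation\<close>

lemma set_pmf_pair_aggregate:
  assumes "0 < q i" "q i < 1" "0 < q j" "q j < 1" "i \<noteq> j" "q' \<in> set_pmf (pair_aggregate q i j)"
  shows "\<forall>k. k \<notin> {i, j} \<longrightarrow> q' k = q k" "q' i + q' j = q i + q j"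
    and "q' i \<in> {0..1}" "q' j \<in> {0..1}" "q' i \<in> {0, 1} \<or> q' j \<in> {0, 1}"
  using assms unfolding pair_aggregate_def by (auto split: if_splits)

lemma finite_set_pmf_pair_aggregate: "finite (set_pmf (pair_aggregate q i j))"
  unfolding pair_aggregate_def by auto

lemma expectation_pair_aggregate:
  fixes f :: "real \<Rightarrow> real \<Rightarrow> real"
  assumes "0 < q i" "q i < 1" "0 < q j" "q j < 1" "i \<noteq> j"
  defines "s \<equiv> q i + q j"
  shows "measure_pmf.expectation (pair_aggregate q i j) (\<lambda>q'. f (q' i) (q' j)) =
    (if s < 1 then q i / s * f s 0 + (1 - q i / s) * f 0 s
     else (1 - q j) / (2 - s) * f 1 (s - 1) + (1 - (1 - q j) / (2 - s)) * f (s - 1) 1)"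
  using assms by (auto simp: pair_aggregate_def divide_le_eq_1 diff_diff_add)

text \<open>Negative correlation of the two touched entries, as inclusion (\<open>g = id\<close>) and as
  exclusion (\<open>g = 1 - z\<close>) indicators.\<close>
lemma pair_aggregate_prod_le:
  assumes "0 < q i" "q i < 1" "0 < q j" "q j < 1" "i \<noteq> j" "K \<subseteq> {i, j}"
    and g: "g = id \<or> g = (\<lambda>z. 1 - z)"
  shows "measure_pmf.expectation (pair_aggregate q i j) (\<lambda>q'. \<Prod>k\<in>K. g (q' k)) \<le> (\<Prod>k\<in>K. g (q k))"
proof -
  define f where "f x y = (if i \<in> K then g x else 1) * (if j \<in> K then g y else 1)" for x y
  from \<open>K \<subseteq> {i, j}\<close> consider "K = {}" | "K = {i}" | "K = {j}" | "K = {i, j}"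
    by (cases "i \<in> K"; cases "j \<in> K") auto
  then have prod_K: "(\<Prod>k\<in>K. g (r k)) = f (r i) (r j)" for r :: "nat \<Rightarrow> real"
    using \<open>i \<noteq> j\<close> by cases (simp_all add: f_def)
  have prods: "0 \<le> q i * q j" "0 \<le> (1 - q i) * (1 - q j)" using assms by simp_all
  show ?thesis
  proof (cases "q i + q j < 1")
    case True
    define t where "t = q i / (q i + q j)"
    have "t * (q i + q j) = q i" using assms by (simp add: t_def)
    with True g prods show ?thesis
      unfolding prod_K expectation_pair_aggregate[OF assms(1-5)] t_def[symmetric]
      by (auto simp: f_def algebra_simps)
  next
    case False
    define t where "t = (1 - q j) / (2 - (q i + q j))"
    have "t * (2 - (q i + q j)) = 1 - q j" using assms by (simp add: t_def)
    with False g prods show ?thesis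
      unfolding prod_K expectation_pair_aggregate[OF assms(1-5)] t_def[symmetric]
      by (auto simp: f_def algebra_simps)
  qed
qed

lemma frac_idx_pair_aggregate_psubset:
  assumes "admissible_pair T n q (i, j)" "q' \<in> set_pmf (pair_aggregate q i j)"
  shows "frac_idx n q' \<subset> frac_idx n q"
proof -
  have ij: "i \<in> frac_idx n q" "j \<in> frac_idx n q" using admissible_pair_frac[OF assms(1)] by auto
  note q' = set_pmf_pair_aggregate[OF admissible_pair_entries[OF assms(1)] assms(2)]
  have "frac_idx n q' \<subseteq> frac_idx n q" using q'(1) ij by (auto simp: frac_idx_def)
  moreover have "i \<notin> frac_idx n q' \<or> j \<notin> frac_idx n q'" using q'(5) by (auto simp: frac_idx_def)
  ultimately show ?thesis using ij by blast
qed

lemma finite_set_pmf_hsum_iter: "finite (set_pmf (hsum_iter n sel k q))"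
  by (induction k arbitrary: q) (auto simp: finite_set_pmf_pair_aggregate)

section \<open>The excess of a range along the procedure\<close>

locale hierarchy_summary =
  fixes T :: ktree and n :: nat and p :: "nat \<Rightarrow> real"
    and sel :: "(nat \<Rightarrow> real) \<Rightarrow> nat \<times> nat"
    and L :: nat and v :: "nat \<Rightarrow> ktree"
  assumes tree: "tree_on T n"
    and p_range: "\<forall>i\<in>{1..n}. 0 \<le> p i \<and> p i \<le> 1"
    and p_int: "(\<Sum>i\<in>{1..n}. p i) \<in> \<int>"
    and sel: "valid_selector T n sel"
    and v_nodes: "\<forall>h\<in>{1..L}. v h \<in> subtrees T"
    and v_disj: "disjoint_family_on (\<lambda>h. range_of (v h)) {1..L}"
begin

abbreviation R :: "nat \<Rightarrow> nat set" where
  "R h \<equiv> range_of (v h)"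

definition excess :: "nat \<Rightarrow> (nat \<Rightarrow> real) \<Rightarrow> real" where
  "excess h q = sum q (R h) - of_int \<lfloor>sum p (R h)\<rfloor>"

definition sample_excess :: "nat \<Rightarrow> nat set \<Rightarrow> real" where
  "sample_excess h X = real (card (X \<inter> R h)) - of_int \<lfloor>sum p (R h)\<rfloor>"

definition invariant :: "(nat \<Rightarrow> real) \<Rightarrow> bool" where
  "invariant q \<longleftrightarrow> (\<forall>k\<in>{1..n}. q k \<in> {0..1}) \<and> sum q {1..n} \<in> \<int> \<and>
     (\<forall>h\<in>{1..L}. excess h q \<in> {0..1})"

lemma finite_R: "finite (R h)"
  by (simp add: range_of_def)

lemma R_subset_keys: "h \<in> {1..L} \<Longrightarrow> R h \<subseteq> {1..n}"
  using range_of_subtree[of "v h" T] v_nodes tree by (simp add: tree_on_def range_of_def)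

lemma admissible_selected:
  "2 \<le> card (frac_idx n q) \<Longrightarrow> admissible_pair T n q (fst (sel q), snd (sel q))"
  using sel by (simp add: valid_selector_def)

lemma excess_p: "excess h p = frac (sum p (R h))"
  by (simp add: excess_def frac_def)

lemma invariant_p: "invariant p"
  using p_range p_int by (simp add: invariant_def excess_p frac_lt_1[THEN less_imp_le])

lemma invariant_integral_entry:
  assumes "invariant q" "k \<in> {1..n}" "k \<notin> frac_idx n q"
  shows "q k \<in> {0, 1}"
proof -
  have "q k \<in> {0..1}" using assms(1,2) by (simp add: invariant_def)
  then show ?thesis using assms(2,3) by (auto simp: frac_idx_def)
qed

lemma excess_single_frac:
  assumes "invariant q" "h \<in> {1..L}" "frac_idx n q \<inter> R h = {k}"
  shows "excess h q = q k"
proof -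
  have k: "k \<in> R h" "0 < q k" "q k < 1" using assms(3) by (auto simp: frac_idx_def)
  have "\<forall>l\<in>R h - {k}. q l \<in> \<int>"
  proof
    fix l assume "l \<in> R h - {k}"
    then have "l \<in> {1..n}" "l \<notin> frac_idx n q" using R_subset_keys[OF assms(2)] assms(3) by auto
    then have "q l \<in> {0, 1}" by (rule invariant_integral_entry[OF assms(1)])
    then show "q l \<in> \<int>" by auto
  qed
  then have "sum q (R h) - q k \<in> \<int>" by (rule sum_minus_in_Ints[OF finite_R k(1)])
  moreover have "excess h q - q k = (sum q (R h) - q k) - of_int \<lfloor>sum p (R h)\<rfloor>"
    by (simp add: excess_def)
  ultimately have "excess h q - q k \<in> \<int>" by (metis Ints_diff Ints_of_int)
  moreover have "excess h q \<in> {0..1}" using assms(1,2) by (simp add: invariant_def)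
  then have "\<bar>excess h q - q k\<bar> < 1" using k by (simp add: abs_less_iff)
  ultimately show ?thesis using Ints_nonzero_abs_less1[of "excess h q - q k"] by simp
qed

lemma excess_crossing:
  assumes "invariant q" "admissible_pair T n q (i, j)" "h \<in> {1..L}" "R h \<inter> {i, j} = {k}"
  shows "excess h q = q k"
proof -
  from assms(4) admissible_pair_entries(5)[OF assms(2)] consider "k = i" "j \<notin> R h" | "k = j" "i \<notin> R h"
    by (cases "i \<in> R h"; cases "j \<in> R h") auto
  then have "frac_idx n q \<inter> R h = {k}"
    using admissible_pair_crossing[OF tree v_nodes[rule_format, OF assms(3)]] assms(2,4)
      admissible_pair_swap by cases blast+
  then show ?thesis using excess_single_frac[OF assms(1,3)] by blast
qed

lemma excess_pair_aggregate:
  assumes "admissible_pair T n q (i, j)" "q' \<in> set_pmf (pair_aggregate q i j)"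
  shows "R h \<inter> {i, j} = {k} \<Longrightarrow> excess h q' = excess h q + q' k - q k"
    and "R h \<inter> {i, j} \<in> {{}, {i, j}} \<Longrightarrow> excess h q' = excess h q"
proof -
  note q' = set_pmf_pair_aggregate[OF admissible_pair_entries[OF assms(1)] assms(2)]
  have diff: "excess h q' - excess h q = (\<Sum>l\<in>R h \<inter> {i, j}. q' l - q l)"
    using sum_diff_on_changed[OF finite_R q'(1)] by (simp add: excess_def)
  show "R h \<inter> {i, j} = {k} \<Longrightarrow> excess h q' = excess h q + q' k - q k"
    using diff by simp
  show "R h \<inter> {i, j} \<in> {{}, {i, j}} \<Longrightarrow> excess h q' = excess h q"
    using diff q'(2) admissible_pair_entries(5)[OF assms(1)] by auto
qed

lemma invariant_pair_aggregate:
  assumes "invariant q" "admissible_pair T n q (i, j)" "q' \<in> set_pmf (pair_aggregate q i j)"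
  shows "invariant q'"
proof -
  have ij: "i \<in> {1..n}" "j \<in> {1..n}"
    using admissible_pair_frac[OF assms(2)] by (auto simp: frac_idx_def)
  note q' = set_pmf_pair_aggregate[OF admissible_pair_entries[OF assms(2)] assms(3)]
  have "\<forall>k\<in>{1..n}. q' k \<in> {0..1}"
    using assms(1) q'(1,3,4) by (auto simp: invariant_def)
  moreover have "sum q' {1..n} = sum q {1..n}"
    using sum_diff_on_changed[of "{1..n}" "{i, j}" q' q] q'(1,2) ij admissible_pair_entries(5)[OF assms(2)]
    by auto
  moreover have "excess h q' \<in> {0..1}" if h: "h \<in> {1..L}" for h
  proof (cases rule: Int_pair_cases[of "R h" i j])
    case (1 k)
    then have "k \<in> {i, j}" by blast
    then show ?thesis
      using excess_pair_aggregate(1)[OF assms(2,3) 1] excess_crossing[OF assms(1,2) h 1] q'(3,4)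
      by auto
  next
    case 2
    then show ?thesis
      using excess_pair_aggregate(2)[OF assms(2,3) 2] assms(1) h by (simp add: invariant_def)
  qed
  ultimately show ?thesis using assms(1) by (simp add: invariant_def)
qed

definition crossing_ranges :: "nat \<Rightarrow> nat \<Rightarrow> nat set \<Rightarrow> nat set" where
  "crossing_ranges i j J = {h \<in> J. is_singleton (R h \<inter> {i, j})}"

definition touched_key :: "nat \<Rightarrow> nat \<Rightarrow> nat \<Rightarrow> nat" where
  "touched_key i j h = the_elem (R h \<inter> {i, j})"

lemma touched_key: "h \<in> crossing_ranges i j J \<Longrightarrow> R h \<inter> {i, j} = {touched_key i j h}"
  by (simp add: crossing_ranges_def touched_key_def is_singleton_the_elem)

lemma inj_on_touched_key:
  assumes "J \<subseteq> {1..L}"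
  shows "inj_on (touched_key i j) (crossing_ranges i j J)"
proof
  fix h h' assume h: "h \<in> crossing_ranges i j J" "h' \<in> crossing_ranges i j J"
    and "touched_key i j h = touched_key i j h'"
  then have "touched_key i j h \<in> R h \<inter> R h'" using touched_key by blast
  then show "h = h'"
    using v_disj assms h unfolding disjoint_family_on_def crossing_ranges_def by blast
qed

lemma prod_split_crossing_ranges:
  fixes f r :: "nat \<Rightarrow> real"
  assumes "J \<subseteq> {1..L}" "\<And>h. h \<in> crossing_ranges i j J \<Longrightarrow> f h = r (touched_key i j h)"
  shows "(\<Prod>h\<in>J. f h)
    = (\<Prod>h\<in>J - crossing_ranges i j J. f h) * (\<Prod>k\<in>touched_key i j ` crossing_ranges i j J. r k)"
proof -
  have "finite J" using assms(1) finite_subset by blast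
  moreover have "crossing_ranges i j J \<subseteq> J" by (auto simp: crossing_ranges_def)
  ultimately have "(\<Prod>h\<in>J. f h) = (\<Prod>h\<in>J - crossing_ranges i j J. f h) * (\<Prod>h\<in>crossing_ranges i j J. f h)"
    by (simp add: prod.subset_diff)
  then show ?thesis
    using assms(2) by (simp add: prod.reindex[OF inj_on_touched_key[OF assms(1)]])
qed

lemma expectation_prod_pair_aggregate_le:
  assumes "invariant q" "admissible_pair T n q (i, j)" "J \<subseteq> {1..L}"
    and g: "g = id \<or> g = (\<lambda>z. 1 - z)"
  shows "measure_pmf.expectation (pair_aggregate q i j) (\<lambda>q'. \<Prod>h\<in>J. g (excess h q'))
    \<le> (\<Prod>h\<in>J. g (excess h q))"
proof -
  let ?Jc = "crossing_ranges i j J" and ?K = "touched_key i j ` crossing_ranges i j J"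
  have crossing: "excess h q = q (touched_key i j h)" if "h \<in> ?Jc" for h
    using excess_crossing[OF assms(1,2) _ touched_key[OF that]] that assms(3)
    by (auto simp: crossing_ranges_def)
  define C where "C = (\<Prod>h\<in>J - ?Jc. g (excess h q))"
  have "0 \<le> C"
    using assms(1,3) g unfolding C_def by (intro prod_nonneg) (auto simp: invariant_def)
  have "?K \<subseteq> {i, j}" using touched_key by blast
  then have prod_le: "measure_pmf.expectation (pair_aggregate q i j) (\<lambda>q'. \<Prod>k\<in>?K. g (q' k))
      \<le> (\<Prod>k\<in>?K. g (q k))"
    by (rule pair_aggregate_prod_le[OF admissible_pair_entries[OF assms(2)] _ g])
  have "measure_pmf.expectation (pair_aggregate q i j) (\<lambda>q'. \<Prod>h\<in>J. g (excess h q'))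
      = measure_pmf.expectation (pair_aggregate q i j) (\<lambda>q'. C * (\<Prod>k\<in>?K. g (q' k)))"
  proof (rule expectation_cong_set_pmf)
    fix q' assume q': "q' \<in> set_pmf (pair_aggregate q i j)"
    have "excess h q' = excess h q" if "h \<in> J - ?Jc" for h
      using that excess_pair_aggregate(2)[OF assms(2) q']
      by (cases rule: Int_pair_cases[of "R h" i j]) (auto simp: crossing_ranges_def)
    then have "(\<Prod>h\<in>J - ?Jc. g (excess h q')) = C" unfolding C_def by simp
    moreover have "excess h q' = q' (touched_key i j h)" if "h \<in> ?Jc" for h
      using excess_pair_aggregate(1)[OF assms(2) q' touched_key[OF that]] crossing[OF that] by simp
    then have "(\<Prod>h\<in>J. g (excess h q')) = (\<Prod>h\<in>J - ?Jc. g (excess h q')) * (\<Prod>k\<in>?K. g (q' k))"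
      by (intro prod_split_crossing_ranges[OF assms(3)]) simp
    ultimately show "(\<Prod>h\<in>J. g (excess h q')) = C * (\<Prod>k\<in>?K. g (q' k))" by simp
  qed
  also have "\<dots> \<le> C * (\<Prod>k\<in>?K. g (q k))"
    using mult_left_mono[OF prod_le \<open>0 \<le> C\<close>] by simp
  also have "\<dots> = (\<Prod>h\<in>J. g (excess h q))"
    unfolding C_def using crossing by (intro prod_split_crossing_ranges[OF assms(3), symmetric]) simp
  finally show ?thesis .
qed

lemma invariant_hsum_iter: "invariant q \<Longrightarrow> q' \<in> set_pmf (hsum_iter n sel k q) \<Longrightarrow> invariant q'"
proof (induction k arbitrary: q)
  case (Suc k)
  then show ?case
    using invariant_pair_aggregate[OF Suc.prems(1) admissible_selected]
    by (auto split: if_splits)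
qed simp

lemma card_frac_idx_hsum_iter:
  "q' \<in> set_pmf (hsum_iter n sel k q) \<Longrightarrow>
    card (frac_idx n q') \<le> 1 \<or> card (frac_idx n q') + k \<le> card (frac_idx n q)"
proof (induction k arbitrary: q)
  case (Suc k)
  show ?case
  proof (cases "2 \<le> card (frac_idx n q)")
    case True
    then obtain r where r: "r \<in> set_pmf (pair_aggregate q (fst (sel q)) (snd (sel q)))"
      and q': "q' \<in> set_pmf (hsum_iter n sel k r)"
      using Suc.prems by auto
    have "card (frac_idx n r) < card (frac_idx n q)"
      using frac_idx_pair_aggregate_psubset[OF admissible_selected[OF True] r]
      by (simp add: psubset_card_mono frac_idx_def)
    then show ?thesis using Suc.IH[OF q'] by linarith
  qed (use Suc.prems in simp)
qed simp

lemma expectation_prod_hsum_iter_le: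
  assumes "invariant q" "J \<subseteq> {1..L}" "g = id \<or> g = (\<lambda>z. 1 - z)"
  shows "measure_pmf.expectation (hsum_iter n sel k q) (\<lambda>q'. \<Prod>h\<in>J. g (excess h q'))
    \<le> (\<Prod>h\<in>J. g (excess h q))"
  using assms(1)
proof (induction k arbitrary: q)
  case (Suc k)
  define F where "F = (\<lambda>q'. \<Prod>h\<in>J. g (excess h q'))"
  show ?case
  proof (cases "2 \<le> card (frac_idx n q)")
    case True
    define M where "M = pair_aggregate q (fst (sel q)) (snd (sel q))"
    note adm = admissible_selected[OF True]
    have "measure_pmf.expectation (hsum_iter n sel (Suc k) q) F
        = (\<Sum>r\<in>set_pmf M. pmf M r * measure_pmf.expectation (hsum_iter n sel k r) F)"
      using True pmf_expectation_bind[where A = "set_pmf M" and p = M and f = "hsum_iter n sel k" and h = F]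
      by (simp add: M_def finite_set_pmf_pair_aggregate finite_set_pmf_hsum_iter)
    also have "\<dots> \<le> (\<Sum>r\<in>set_pmf M. pmf M r * F r)"
      using Suc.IH invariant_pair_aggregate[OF Suc.prems adm]
      by (intro sum_mono mult_left_mono) (auto simp: M_def F_def)
    also have "\<dots> = measure_pmf.expectation M F"
      by (simp add: integral_measure_pmf[OF finite_set_pmf_pair_aggregate] M_def)
    also have "\<dots> \<le> F q"
      unfolding M_def F_def by (rule expectation_prod_pair_aggregate_le[OF Suc.prems adm assms(2,3)])
    finally show ?thesis unfolding F_def .
  qed (simp add: F_def)
qed simp

text \<open>With an integral total, a single fractional key is impossible, so the run ends with none.\<close>
lemma frac_idx_final:
  assumes "q \<in> set_pmf (hsum_iter n sel n p)"
  shows "frac_idx n q = {}"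
proof -
  have inv: "invariant q" using invariant_hsum_iter[OF invariant_p assms] .
  have "frac_idx n p \<subseteq> {1..n}" by (auto simp: frac_idx_def)
  then have "card (frac_idx n p) \<le> n" using card_mono[of "{1..n}"] by fastforce
  then have "card (frac_idx n q) \<le> 1" using card_frac_idx_hsum_iter[OF assms] by linarith
  moreover have "frac_idx n q \<noteq> {k}" for k
  proof
    assume single: "frac_idx n q = {k}"
    then have k: "k \<in> {1..n}" "0 < q k" "q k < 1" by (auto simp: frac_idx_def)
    have "\<forall>l\<in>{1..n} - {k}. q l \<in> \<int>"
      using invariant_integral_entry[OF inv] single by fastforce
    then have "sum q {1..n} - q k \<in> \<int>" by (intro sum_minus_in_Ints) (use k in auto)
    moreover have "sum q {1..n} \<in> \<int>" using inv by (simp add: invariant_def)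
    ultimately have "q k \<in> \<int>" using Ints_diff[of "sum q {1..n}" "sum q {1..n} - q k"] by simp
    then show False using k Ints_nonzero_abs_less1 by fastforce
  qed
  moreover have "finite (frac_idx n q)" by (simp add: frac_idx_def)
  ultimately show ?thesis by (metis card_1_singletonE card_0_eq le_Suc_eq le_zero_eq One_nat_def)
qed

lemma excess_final:
  assumes "q \<in> set_pmf (hsum_iter n sel n p)" "h \<in> {1..L}"
  shows "excess h q = sample_excess h {k \<in> {1..n}. q k = 1}" "excess h q \<in> {0, 1}"
proof -
  have inv: "invariant q" using invariant_hsum_iter[OF invariant_p assms(1)] .
  have "\<forall>k\<in>R h. q k \<in> {0, 1}"
    using invariant_integral_entry[OF inv] frac_idx_final[OF assms(1)] R_subset_keys[OF assms(2)]
    by blast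
  then have "sum q (R h) = (\<Sum>k\<in>R h. if q k = 1 then 1 else 0)" by (intro sum.cong) auto
  also have "\<dots> = real (card {k \<in> R h. q k = 1})"
    by (simp add: sum.If_cases finite_R Int_def)
  also have "{k \<in> R h. q k = 1} = {k \<in> {1..n}. q k = 1} \<inter> R h"
    using R_subset_keys[OF assms(2)] by auto
  finally show eq: "excess h q = sample_excess h {k \<in> {1..n}. q k = 1}"
    by (simp add: excess_def sample_excess_def)
  have "excess h q \<in> \<int>" by (simp add: eq sample_excess_def)
  then obtain m where m: "excess h q = of_int m" by (rule Ints_cases)
  moreover have "excess h q \<in> {0..1}" using inv assms(2) by (simp add: invariant_def)
  ultimately have "m = 0 \<or> m = 1" by auto
  with m show "excess h q \<in> {0, 1}" by auto
qed

lemma sample_excess_01: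
  "X \<in> set_pmf (hier_summarize n sel p) \<Longrightarrow> h \<in> {1..L} \<Longrightarrow> sample_excess h X \<in> {0, 1}"
  using excess_final by (auto simp: hier_summarize_def)

lemma expectation_prod_sample_excess_le_frac:
  assumes "J \<subseteq> {1..L}" "g = id \<or> g = (\<lambda>z. 1 - z)"
  shows "measure_pmf.expectation (hier_summarize n sel p) (\<lambda>X. \<Prod>h\<in>J. g (sample_excess h X))
    \<le> (\<Prod>h\<in>J. g (frac (sum p (R h))))"
proof -
  have "measure_pmf.expectation (hier_summarize n sel p) (\<lambda>X. \<Prod>h\<in>J. g (sample_excess h X))
      = measure_pmf.expectation (hsum_iter n sel n p) (\<lambda>q. \<Prod>h\<in>J. g (excess h q))"
    unfolding hier_summarize_def integral_map_pmf
    using excess_final(1) assms(1) by (intro expectation_cong_set_pmf prod.cong) auto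
  also have "\<dots> \<le> (\<Prod>h\<in>J. g (excess h p))"
    by (rule expectation_prod_hsum_iter_le[OF invariant_p assms])
  finally show ?thesis by (simp add: excess_p)
qed

lemma expectation_sample_excess:
  assumes "h \<in> {1..L}"
  shows "measure_pmf.expectation (hier_summarize n sel p) (sample_excess h) = frac (sum p (R h))"
proof -
  let ?E = "measure_pmf.expectation (hier_summarize n sel p)"
  have "finite (set_pmf (hier_summarize n sel p))"
    by (simp add: hier_summarize_def finite_set_pmf_hsum_iter)
  then have "?E (\<lambda>X. 1 - sample_excess h X) = 1 - ?E (sample_excess h)"
    by (simp add: integrable_measure_pmf_finite)
  then show ?thesis
    using expectation_prod_sample_excess_le_frac[of "{h}" id]
      expectation_prod_sample_excess_le_frac[of "{h}" "\<lambda>z. 1 - z"] assms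
    by simp
qed

lemma expectation_prod_sample_excess_le:
  assumes "J \<subseteq> {1..L}" "g = id \<or> g = (\<lambda>z. 1 - z)"
  shows "measure_pmf.expectation (hier_summarize n sel p) (\<lambda>X. \<Prod>h\<in>J. g (sample_excess h X))
    \<le> (\<Prod>h\<in>J. g (measure_pmf.expectation (hier_summarize n sel p) (sample_excess h)))"
  using expectation_prod_sample_excess_le_frac[OF assms] expectation_sample_excess assms(1)
  by (simp add: subset_iff)

end

theorem lemma4:
  fixes T :: ktree and n :: nat and p :: "nat \<Rightarrow> real"
    and sel :: "(nat \<Rightarrow> real) \<Rightarrow> nat \<times> nat"
    and L :: nat and v :: "nat \<Rightarrow> ktree"
  assumes tree: "tree_on T n"
    and p_range: "\<forall>i\<in>{1..n}. 0 \<le> p i \<and> p i \<le> 1"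
    and p_int: "(\<Sum>i\<in>{1..n}. p i) \<in> \<int>"
    and sel: "valid_selector T n sel"
    and v_nodes: "\<forall>h\<in>{1..L}. v h \<in> subtrees T"
    and v_disj: "\<forall>h\<in>{1..L}. \<forall>h'\<in>{1..L}. h \<noteq> h' \<longrightarrow> range_of (v h) \<inter> range_of (v h') = {}"
  defines "S \<equiv> hier_summarize n sel p"
    and "Q \<equiv> (\<Union>h\<in>{1..L}. range_of (v h))"
    and "Y \<equiv> \<lambda>h (X :: nat set). real (card (X \<inter> range_of (v h)))
                   - of_int \<lfloor>\<Sum>i\<in>range_of (v h). p i\<rfloor>"
    and "\<mu> \<equiv> (\<Sum>h\<in>{1..L}. (\<Sum>i\<in>range_of (v h). p i) - of_int \<lfloor>\<Sum>i\<in>range_of (v h). p i\<rfloor>)"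
  shows "(\<forall>X\<in>set_pmf S. \<bar>real (card (X \<inter> Q)) - (\<Sum>i\<in>Q. p i)\<bar> \<le> real L)
    \<and> \<mu> \<le> real L
    \<and> (\<forall>X\<in>set_pmf S. \<forall>h\<in>{1..L}. Y h X \<in> {0, 1})
    \<and> (\<forall>h\<in>{1..L}. measure_pmf.expectation S (Y h) = (\<Sum>i\<in>range_of (v h). p i) - of_int \<lfloor>\<Sum>i\<in>range_of (v h). p i\<rfloor>)
    \<and> (\<forall>J\<subseteq>{1..L}. measure_pmf.expectation S (\<lambda>X. \<Prod>h\<in>J. Y h X)
            \<le> (\<Prod>h\<in>J. measure_pmf.expectation S (Y h)))
    \<and> (\<forall>J\<subseteq>{1..L}. measure_pmf.expectation S (\<lambda>X. \<Prod>h\<in>J. 1 - Y h X)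
            \<le> (\<Prod>h\<in>J. 1 - measure_pmf.expectation S (Y h)))
    \<and> (\<forall>X\<in>set_pmf S. real (card (X \<inter> Q)) - (\<Sum>i\<in>Q. p i) = (\<Sum>h\<in>{1..L}. Y h X) - \<mu>)"
proof -
  interpret hierarchy_summary T n p sel L v
    using tree p_range p_int sel v_nodes v_disj by unfold_locales (auto simp: disjoint_family_on_def)
  have Y: "Y = sample_excess" by (simp add: Y_def sample_excess_def fun_eq_iff)
  have frac: "(\<Sum>i\<in>R h. p i) - of_int \<lfloor>\<Sum>i\<in>R h. p i\<rfloor> = frac (sum p (R h))" for h
    by (simp add: frac_def)
  have decomp: "real (card (X \<inter> Q)) - (\<Sum>i\<in>Q. p i) = (\<Sum>h\<in>{1..L}. Y h X) - \<mu>" for X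
    unfolding Q_def Y_def \<mu>_def using v_disj
    by (intro card_Int_UNION_minus_sum) (auto simp: disjoint_family_on_def finite_R)
  have "\<mu> \<in> {0..real L}"
    using sum_bounded_above[of "{1..L}" "\<lambda>h. frac (sum p (R h))" 1]
    by (auto simp: \<mu>_def frac less_imp_le[OF frac_lt_1] intro: sum_nonneg)
  moreover have Y_01: "\<forall>h\<in>{1..L}. Y h X \<in> {0, 1}" if "X \<in> set_pmf S" for X
    using sample_excess_01 that by (simp add: S_def Y)
  ultimately have "\<bar>real (card (X \<inter> Q)) - (\<Sum>i\<in>Q. p i)\<bar> \<le> real L" if "X \<in> set_pmf S" for X
    unfolding decomp using abs_sum_minus_le_card[of "{1..L}" "\<lambda>h. Y h X" \<mu>] Y_01[OF that] by force
  then show ?thesis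
    using decomp Y_01 \<open>\<mu> \<in> {0..real L}\<close> expectation_sample_excess
      expectation_prod_sample_excess_le[of _ id] expectation_prod_sample_excess_le[of _ "\<lambda>z. 1 - z"]
    by (auto simp: S_def Y frac)
qed

end
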